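(* Let $a=a_0+a_1e_1+a_2e_2+a_3e_3\in C\ell_2$. Define $$a^+=\begin{cases}0,& a=0;\\ \dfrac{\bar a}{H_a},& H_a\neq 0;\\ \dfrac{a'}{4(a_0^2+a_3^2)},& H_a=0\text{ and }a\neq 0.\end{cases}$$ Then $a^+$ is the Moore–Penrose inverse of $a$, i.e. $x=a^+$ satisfies $axa=a$, $xax=x$, $(ax)'=ax$, $(xa)'=xa$.
   Context: $C\ell_2$ is the 4-dimensional real associative algebra with basis $1,e_1,e_2,e_3$ and multiplication $e_1^2=e_2^2=1$, $e_3^2=-1$, $e_1e_2=e_3=-e_2e_1$, $e_1e_3=e_2=-e_3e_1$, $e_3e_2=e_1=-e_2e_3$. For $a=a_0+a_1e_1+a_2e_2+a_3e_3$ ($a_i\in\mathbb{R}$): $\bar a=a_0-a_1e_1-a_2e_2-a_3e_3$, $a'=a_0+a_1e_1+a_2e_2-a_3e_3$, $H_a=a\bar a=a_0^2-a_1^2-a_2^2+a_3^2$. A Moore–Penrose inverse of $a$ is an element $x\in C\ell_2$ with $axa=a$, $xax=x$, $(ax)'=ax$, $(xa)'=xa$. *)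

theory Defs
  imports Main Complex_Main
begin

text \<open>Elements of Cl_2: a = a0 + a1 e1 + a2 e2 + a3 e3, stored as four real coordinates.\<close>
datatype cl2 = Cl2 (c0: real) (c1: real) (c2: real) (c3: real)

definition cl2_zero :: cl2 where "cl2_zero = Cl2 0 0 0 0"

text \<open>Multiplication from e1^2=e2^2=1, e3^2=-1, e1e2=e3=-e2e1, e1e3=e2=-e3e1, e3e2=e1=-e2e3.\<close>
definition cl2_mult :: "cl2 \<Rightarrow> cl2 \<Rightarrow> cl2" where
  "cl2_mult a b = Cl2
     (c0 a * c0 b + c1 a * c1 b + c2 a * c2 b - c3 a * c3 b)
     (c0 a * c1 b + c1 a * c0 b - c2 a * c3 b + c3 a * c2 b)
     (c0 a * c2 b + c2 a * c0 b + c1 a * c3 b - c3 a * c1 b)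
     (c0 a * c3 b + c3 a * c0 b + c1 a * c2 b - c2 a * c1 b)"

definition cl2_scale :: "real \<Rightarrow> cl2 \<Rightarrow> cl2" where
  "cl2_scale r a = Cl2 (r * c0 a) (r * c1 a) (r * c2 a) (r * c3 a)"

definition cl2_bar :: "cl2 \<Rightarrow> cl2" where
  "cl2_bar a = Cl2 (c0 a) (- c1 a) (- c2 a) (- c3 a)"

definition cl2_prime :: "cl2 \<Rightarrow> cl2" where
  "cl2_prime a = Cl2 (c0 a) (c1 a) (c2 a) (- c3 a)"

definition cl2_H :: "cl2 \<Rightarrow> real" where
  "cl2_H a = (c0 a)^2 - (c1 a)^2 - (c2 a)^2 + (c3 a)^2"

definition is_MP_inverse :: "cl2 \<Rightarrow> cl2 \<Rightarrow> bool" where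
  "is_MP_inverse a x \<longleftrightarrow>
     cl2_mult (cl2_mult a x) a = a \<and>
     cl2_mult (cl2_mult x a) x = x \<and>
     cl2_prime (cl2_mult a x) = cl2_mult a x \<and>
     cl2_prime (cl2_mult x a) = cl2_mult x a"

definition cl2_plus :: "cl2 \<Rightarrow> cl2" where
  "cl2_plus a =
    (if a = cl2_zero then cl2_zero
     else if cl2_H a \<noteq> 0 then cl2_scale (1 / cl2_H a) (cl2_bar a)
     else cl2_scale (1 / (4 * ((c0 a)^2 + (c3 a)^2))) (cl2_prime a))"

end

theory Submission
  imports Defs
begin

text \<open>
  If \<open>a b a = c a\<close> and \<open>b a b = c b\<close> for a real \<open>c \<noteq> 0\<close>, then \<open>b / c\<close> satisfies the first
  two Penrose equations, and the two symmetry conditions hold as soon as \<open>a b\<close> and \<open>b a\<close> have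
  no \<open>e\<^sub>3\<close>-component. For \<open>H\<^sub>a \<noteq> 0\<close> take \<open>b\<close> the conjugate of \<open>a\<close> and \<open>c = H\<^sub>a\<close>: both
  products of \<open>a\<close> with its conjugate equal the scalar \<open>H\<^sub>a\<close>. For \<open>H\<^sub>a = 0\<close>, \<open>a \<noteq> 0\<close> take
  \<open>b = a'\<close>: the products \<open>a a'\<close> and \<open>a' a\<close> never have an \<open>e\<^sub>3\<close>-component, \<open>H\<^sub>a = 0\<close> gives
  \<open>a a' a = 4(a\<^sub>0\<^sup>2 + a\<^sub>3\<^sup>2) a\<close>, and \<open>a\<^sub>0\<^sup>2 + a\<^sub>3\<^sup>2 = (a\<^sub>0\<^sup>2 + a\<^sub>1\<^sup>2 + a\<^sub>2\<^sup>2 + a\<^sub>3\<^sup>2)/2 > 0\<close>.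
\<close>

lemma cl2_mult_scale_left: "cl2_mult (cl2_scale k a) b = cl2_scale k (cl2_mult a b)"
  unfolding cl2_mult_def cl2_scale_def by (simp add: algebra_simps)

lemma cl2_mult_scale_right: "cl2_mult a (cl2_scale k b) = cl2_scale k (cl2_mult a b)"
  unfolding cl2_mult_def cl2_scale_def by (simp add: algebra_simps)

lemma cl2_scale_scale: "cl2_scale k (cl2_scale l a) = cl2_scale (k * l) a"
  unfolding cl2_scale_def by (simp add: algebra_simps)

lemma cl2_scale_one: "cl2_scale 1 a = a"
  unfolding cl2_scale_def by simp

lemma cl2_prime_eqI: "c3 a = 0 \<Longrightarrow> cl2_prime a = a"
  unfolding cl2_prime_def by (cases a) simp

lemma cl2_prime_scale: "cl2_prime (cl2_scale k a) = cl2_scale k (cl2_prime a)"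
  unfolding cl2_prime_def cl2_scale_def by simp

lemma is_MP_inverse_zero: "is_MP_inverse cl2_zero cl2_zero"
  unfolding is_MP_inverse_def cl2_zero_def cl2_mult_def cl2_prime_def by simp

lemma is_MP_inverse_scale_inverse:
  assumes "c \<noteq> 0"
    and "cl2_mult (cl2_mult a b) a = cl2_scale c a"
    and "cl2_mult (cl2_mult b a) b = cl2_scale c b"
    and "c3 (cl2_mult a b) = 0" and "c3 (cl2_mult b a) = 0"
  shows "is_MP_inverse a (cl2_scale (1 / c) b)"
  using assms
  by (simp add: is_MP_inverse_def cl2_mult_scale_left cl2_mult_scale_right cl2_scale_scale
      cl2_scale_one cl2_prime_scale cl2_prime_eqI)

lemma cl2_mult_bar_mult:
  "cl2_mult (cl2_mult a (cl2_bar a)) a = cl2_scale (cl2_H a) a"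
  "cl2_mult (cl2_mult (cl2_bar a) a) (cl2_bar a) = cl2_scale (cl2_H a) (cl2_bar a)"
  unfolding cl2_mult_def cl2_bar_def cl2_scale_def cl2_H_def
  by (simp_all add: power2_eq_square algebra_simps)

lemma c3_mult_bar:
  "c3 (cl2_mult a (cl2_bar a)) = 0" "c3 (cl2_mult (cl2_bar a) a) = 0"
  unfolding cl2_mult_def cl2_bar_def by simp_all

lemma cl2_mult_prime_mult:
  assumes "cl2_H a = 0"
  shows "cl2_mult (cl2_mult a (cl2_prime a)) a = cl2_scale (4 * ((c0 a)\<^sup>2 + (c3 a)\<^sup>2)) a"
    and "cl2_mult (cl2_mult (cl2_prime a) a) (cl2_prime a)
           = cl2_scale (4 * ((c0 a)\<^sup>2 + (c3 a)\<^sup>2)) (cl2_prime a)"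
  using assms unfolding cl2_mult_def cl2_prime_def cl2_scale_def cl2_H_def
  by (simp_all, (intro conjI; algebra)+)

lemma c3_mult_prime:
  "c3 (cl2_mult a (cl2_prime a)) = 0" "c3 (cl2_mult (cl2_prime a) a) = 0"
  unfolding cl2_mult_def cl2_prime_def by simp_all

lemma cl2_H_eq_0_imp_scalar_part_pos:
  assumes "cl2_H a = 0" and "a \<noteq> cl2_zero"
  shows "(c0 a)\<^sup>2 + (c3 a)\<^sup>2 > 0"
proof (rule ccontr)
  assume "\<not> (c0 a)\<^sup>2 + (c3 a)\<^sup>2 > 0"
  moreover have "(c0 a)\<^sup>2 \<ge> 0" "(c1 a)\<^sup>2 \<ge> 0" "(c2 a)\<^sup>2 \<ge> 0" "(c3 a)\<^sup>2 \<ge> 0"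
    by simp_all
  ultimately have "(c0 a)\<^sup>2 = 0" "(c1 a)\<^sup>2 = 0" "(c2 a)\<^sup>2 = 0" "(c3 a)\<^sup>2 = 0"
    using \<open>cl2_H a = 0\<close> unfolding cl2_H_def by linarith+
  with \<open>a \<noteq> cl2_zero\<close> show False
    unfolding cl2_zero_def by (cases a) simp
qed

theorem theorem3p1:
  fixes a :: cl2
  shows "is_MP_inverse a (cl2_plus a)"
proof -
  consider "a = cl2_zero" | "a \<noteq> cl2_zero" "cl2_H a \<noteq> 0" | "a \<noteq> cl2_zero" "cl2_H a = 0"
    by blast
  then show ?thesis
  proof cases
    case 1
    then show ?thesis by (simp add: cl2_plus_def is_MP_inverse_zero)
  next
    case 2
    then show ?thesis
      by (simp add: cl2_plus_def is_MP_inverse_scale_inverse cl2_mult_bar_mult c3_mult_bar)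
  next
    case 3
    then have "4 * ((c0 a)\<^sup>2 + (c3 a)\<^sup>2) \<noteq> 0"
      using cl2_H_eq_0_imp_scalar_part_pos by force
    with 3 show ?thesis
      by (simp add: cl2_plus_def is_MP_inverse_scale_inverse cl2_mult_prime_mult c3_mult_prime)
  qed
qed

end
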